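(* Let $C\ge 2$ be an integer and let $r>0$. Let $B_r(0)=\{\mathbf{h}\in\mathbb{R}^C:\|\mathbf{h}\|_2\le r\}$. Define $$H^*(r,C):=\min_{\mathbf{h}\in B_r(0)} H(\mathrm{softmax}(\mathbf{h})).$$ Then $$H^*(r,C) > \log\left(1+(C-1)\exp\left(-\sqrt{\tfrac{C}{C-1}}\,r\right)\right).$$ In particular, for every $\mathbf{h}\in B_r(0)$, $H(\mathrm{softmax}(\mathbf{h}))>\log\left(1+(C-1)\exp\left(-\sqrt{\tfrac{C}{C-1}}\,r\right)\right)$. *)

theory Defs
  imports "HOL-Analysis.Analysis"
begin

text \<open>Softmax of a logit vector in R^C, indices given by a finite type 'n with CARD('n) = C.\<close>
definition softmax :: "real ^ 'n::finite \<Rightarrow> real ^ 'n" where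
  "softmax h = (\<chi> i. exp (h $ i) / (\<Sum>j\<in>UNIV. exp (h $ j)))"

definition entropy :: "real ^ 'n::finite \<Rightarrow> real" where
  "entropy p = - (\<Sum>i\<in>UNIV. (if p $ i = 0 then 0 else p $ i * ln (p $ i)))"

text \<open>H*(r,C): minimum of the softmax entropy over the closed Euclidean ball of radius r
  (the minimum is attained by compactness, so it equals the infimum).\<close>
definition Hstar :: "real \<Rightarrow> 'n::finite itself \<Rightarrow> real" where
  "Hstar r _ = (INF h \<in> cball (0 :: real ^ 'n) r. entropy (softmax h))"

end

theory Submission
  imports Defs
begin

text \<open>Let \<open>k\<close> index a largest logit and \<open>p = softmax h\<close>. Then
  \<open>H(p) = ln (\<Sum>j. exp (h\<^sub>j - h\<^sub>k)) + (h\<^sub>k - \<Sum>i. p\<^sub>i h\<^sub>i)\<close>, where the second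
  term is nonnegative, and positive unless \<open>h\<close> is constant. In the sum the \<open>k\<close>-th term is 1 and, by
  AM-GM, the other \<open>C - 1\<close> terms add up to at least \<open>(C - 1) exp (- D / (C - 1))\<close> with
  \<open>D = \<Sum>j. h\<^sub>k - h\<^sub>j\<close>. Cauchy-Schwarz against \<open>C e\<^sub>k - (1,\<dots>,1)\<close>, a vector of norm
  \<open>sqrt (C (C - 1))\<close>, gives \<open>D / (C - 1) \<le> sqrt (C / (C - 1)) \<parallel>h\<parallel>\<close>. Finally the minimum
  over the compact ball is attained, so the strict bound carries over to \<open>H*\<close>.\<close>

lemma sum_exp_ge_card_mult_exp_mean:
  fixes x :: "'a \<Rightarrow> real"
  assumes "finite A"
  shows "real (card A) * exp ((\<Sum>j\<in>A. x j) / real (card A)) \<le> (\<Sum>j\<in>A. exp (x j))"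
proof (cases "A = {}")
  case False
  define m where "m = (\<Sum>j\<in>A. x j) / real (card A)"
  have card_pos: "real (card A) > 0" using assms False by (simp add: card_gt_0_iff)
  have tangent: "exp m * (1 + (x j - m)) \<le> exp (x j)" for j
  proof -
    have "exp m * (1 + (x j - m)) \<le> exp m * exp (x j - m)"
      by (intro mult_left_mono) (auto simp: exp_ge_add_one_self)
    also have "\<dots> = exp (x j)" by (simp add: exp_diff)
    finally show ?thesis .
  qed
  have "real (card A) * exp m = (\<Sum>j\<in>A. exp m * (1 + (x j - m)))"
    using card_pos by (simp add: sum.distrib sum_subtractf flip: sum_distrib_left)
      (simp add: m_def algebra_simps)
  also have "\<dots> \<le> (\<Sum>j\<in>A. exp (x j))" by (intro sum_mono tangent)
  finally show ?thesis by (simp add: m_def)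
qed simp

lemma sum_exp_diff_ge:
  fixes x :: "'a \<Rightarrow> real"
  assumes "finite A" "k \<in> A"
  shows "1 + (real (card A) - 1) * exp (- ((\<Sum>j\<in>A. x k - x j) / (real (card A) - 1)))
         \<le> (\<Sum>j\<in>A. exp (x j - x k))"
proof -
  have card_rest: "real (card (A - {k})) = real (card A) - 1"
  proof -
    have "0 < card A" using assms by (auto simp: card_gt_0_iff)
    then show ?thesis using assms by (simp add: card_Diff_singleton of_nat_diff Suc_le_eq)
  qed
  have "(\<Sum>j\<in>A - {k}. x j - x k) = - (\<Sum>j\<in>A. x k - x j)"
    using assms by (simp add: sum.remove sum_negf[symmetric])
  then have "(real (card A) - 1) * exp (- ((\<Sum>j\<in>A. x k - x j) / (real (card A) - 1)))
             \<le> (\<Sum>j\<in>A - {k}. exp (x j - x k))"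
    using sum_exp_ge_card_mult_exp_mean[of "A - {k}" "\<lambda>j. x j - x k"] assms card_rest by simp
  then show ?thesis using assms by (simp add: sum.remove)
qed

lemma sum_weighted_le_bound:
  fixes w x :: "'a \<Rightarrow> real"
  assumes "\<And>i. i \<in> A \<Longrightarrow> 0 \<le> w i" "sum w A = 1" "\<And>i. i \<in> A \<Longrightarrow> x i \<le> M"
  shows "(\<Sum>i\<in>A. w i * x i) \<le> M"
proof -
  have "(\<Sum>i\<in>A. w i * x i) \<le> (\<Sum>i\<in>A. w i * M)"
    using assms by (intro sum_mono mult_left_mono) auto
  then show ?thesis using assms(2) by (simp flip: sum_distrib_right)
qed

lemma sum_weighted_less_bound:
  fixes w x :: "'a \<Rightarrow> real"
  assumes "finite A" "\<And>i. i \<in> A \<Longrightarrow> 0 < w i" "sum w A = 1"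
    and "\<And>i. i \<in> A \<Longrightarrow> x i \<le> M" "j \<in> A" "x j < M"
  shows "(\<Sum>i\<in>A. w i * x i) < M"
proof -
  have "(\<Sum>i\<in>A. w i * x i) < (\<Sum>i\<in>A. w i * M)"
    using assms by (intro sum_strict_mono_ex1) (auto intro: mult_left_mono less_imp_le)
  then show ?thesis using assms(3) by (simp flip: sum_distrib_right)
qed

lemma sum_gap_le_norm:
  fixes h :: "real ^ 'n::finite"
  shows "(\<Sum>j\<in>UNIV. h $ k - h $ j) \<le> sqrt (real CARD('n) * (real CARD('n) - 1)) * norm h"
proof -
  define C where "C = real CARD('n)"
  define u :: "real ^ 'n" where "u = (\<chi> j. if j = k then C - 1 else - 1)"
  have "inner u h = (\<Sum>j\<in>UNIV. (if j = k then C * h $ j else 0) - h $ j)"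
    unfolding inner_vec_def by (intro sum.cong) (auto simp: u_def algebra_simps)
  also have "\<dots> = (\<Sum>j\<in>UNIV. h $ k - h $ j)"
    by (simp add: sum_subtractf C_def)
  finally have "inner u h = (\<Sum>j\<in>UNIV. h $ k - h $ j)" .
  moreover have "inner u u = (\<Sum>j\<in>UNIV. (if j = k then C * (C - 2) else 0) + 1)"
    unfolding inner_vec_def by (intro sum.cong) (auto simp: u_def algebra_simps)
  then have "inner u u = C * (C - 1)"
    by (simp add: sum.distrib C_def algebra_simps)
  ultimately show ?thesis
    using norm_cauchy_schwarz[of u h] by (simp add: norm_eq_sqrt_inner C_def)
qed

lemma softmax_pos: "0 < softmax h $ i"
  by (simp add: softmax_def sum_pos)

lemma sum_softmax: "(\<Sum>i\<in>UNIV. softmax h $ i) = 1"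
proof -
  have "(\<Sum>j\<in>UNIV. exp (h $ j)) > 0" by (simp add: sum_pos)
  then show ?thesis by (simp add: softmax_def flip: sum_divide_distrib)
qed

lemma entropy_softmax:
  "entropy (softmax h) = ln (\<Sum>j\<in>UNIV. exp (h $ j)) - (\<Sum>i\<in>UNIV. softmax h $ i * h $ i)"
proof -
  define Z where "Z = (\<Sum>j\<in>UNIV. exp (h $ j))"
  have "Z > 0" by (simp add: Z_def sum_pos)
  then have ln_softmax: "ln (softmax h $ i) = h $ i - ln Z" for i
    by (simp add: softmax_def Z_def ln_div)
  have "entropy (softmax h) = (\<Sum>i\<in>UNIV. softmax h $ i * ln Z - softmax h $ i * h $ i)"
    unfolding entropy_def sum_negf[symmetric]
    by (intro sum.cong refl)
      (simp add: ln_softmax algebra_simps dual_order.strict_implies_not_eq[OF softmax_pos])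
  also have "\<dots> = ln Z - (\<Sum>i\<in>UNIV. softmax h $ i * h $ i)"
    by (simp add: sum_subtractf sum_softmax flip: sum_distrib_right)
  finally show ?thesis by (simp add: Z_def)
qed

lemma continuous_on_entropy_softmax:
  "continuous_on S (\<lambda>h :: real ^ 'n::finite. entropy (softmax h))"
proof -
  have "\<And>h :: real ^ 'n. (\<Sum>j\<in>UNIV. exp (h $ j)) \<noteq> 0"
    by (simp add: sum_pos dual_order.strict_implies_not_eq)
  then show ?thesis
    unfolding entropy_softmax by (auto simp: softmax_def intro!: continuous_intros)
qed

lemma entropy_softmax_eq_ln_sum_exp_diff:
  "entropy (softmax h) =
     ln (\<Sum>j\<in>UNIV. exp (h $ j - h $ k)) + (h $ k - (\<Sum>i\<in>UNIV. softmax h $ i * h $ i))"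
proof -
  have "(\<Sum>j\<in>UNIV. exp (h $ j - h $ k)) = (\<Sum>j\<in>UNIV. exp (h $ j)) / exp (h $ k)"
    by (simp add: exp_diff sum_divide_distrib)
  moreover have "0 < (\<Sum>j\<in>UNIV. exp (h $ j))" by (simp add: sum_pos)
  ultimately have "ln (\<Sum>j\<in>UNIV. exp (h $ j - h $ k)) = ln (\<Sum>j\<in>UNIV. exp (h $ j)) - h $ k"
    by (simp add: ln_div)
  then show ?thesis by (simp add: entropy_softmax)
qed

lemma entropy_softmax_gt:
  fixes h :: "real ^ 'n::finite"
  assumes "CARD('n) \<ge> 2" "r > 0" "norm h \<le> r"
  shows "entropy (softmax h) >
           ln (1 + (real CARD('n) - 1) * exp (- sqrt (real CARD('n) / (real CARD('n) - 1)) * r))"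
proof -
  define C where "C = real CARD('n)"
  define g where "g t = ln (1 + (C - 1) * exp (- t))" for t
  have C: "C \<ge> 2" using assms(1) by (simp add: C_def)
  have g_less: "g t < g t'" if "t' < t" for t t'
    using C that by (simp add: g_def add_pos_nonneg)
  have g_le: "g t \<le> g t'" if "t' \<le> t" for t t'
    using g_less that by (cases "t = t'") (auto simp: order_le_less)
  obtain k where k: "\<And>j. h $ j \<le> h $ k"
  proof -
    have "Max (range (($) h)) \<in> range (($) h)" by (intro Max_in) auto
    then obtain k where "h $ k = Max (range (($) h))" by (metis imageE)
    then show ?thesis using that[of k] by (simp add: Max_ge)
  qed
  define D where "D = (\<Sum>j\<in>UNIV. h $ k - h $ j)"
  define E where "E = (\<Sum>i\<in>UNIV. softmax h $ i * h $ i)"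
  have "g (D / (C - 1)) \<le> ln (\<Sum>j\<in>UNIV. exp (h $ j - h $ k))"
    unfolding g_def D_def C_def using C
    by (intro ln_mono sum_exp_diff_ge) (auto simp: C_def add_pos_nonneg)
  then have entropy_ge: "g (D / (C - 1)) + (h $ k - E) \<le> entropy (softmax h)"
    by (simp add: entropy_softmax_eq_ln_sum_exp_diff[of h k] E_def)
  have "D \<le> sqrt (C * (C - 1)) * r"
    unfolding D_def C_def using assms(3)
    by (rule order_trans[OF sum_gap_le_norm mult_left_mono]) simp
  then have "D / (C - 1) \<le> sqrt (C * (C - 1)) / (C - 1) * r"
    using C by (simp add: divide_right_mono)
  moreover have "sqrt (C * (C - 1)) / (C - 1) = sqrt (C / (C - 1))"
  proof -
    have "C / (C - 1) = C * (C - 1) / (C - 1)\<^sup>2" using C by (simp add: power2_eq_square)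
    then show ?thesis using C by (simp add: real_sqrt_divide)
  qed
  ultimately have gap: "D / (C - 1) \<le> sqrt (C / (C - 1)) * r" by simp
  have "E \<le> h $ k"
    unfolding E_def using softmax_pos[of h]
    by (intro sum_weighted_le_bound) (auto simp: sum_softmax k less_imp_le)
  have "g (sqrt (C / (C - 1)) * r) < g (D / (C - 1)) + (h $ k - E)"
  proof (cases "\<forall>j. h $ j = h $ k")
    case True
    then have "D = 0" unfolding D_def by (metis diff_self sum.neutral)
    moreover have "0 < sqrt (C / (C - 1)) * r" using C assms(2) by simp
    ultimately show ?thesis using g_less \<open>E \<le> h $ k\<close> by fastforce
  next
    case False
    then obtain j where "h $ j < h $ k" using k by (meson order_le_neq_trans)
    then have "E < h $ k"
      unfolding E_def using softmax_pos[of h]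
      by (intro sum_weighted_less_bound[where j = j]) (auto simp: sum_softmax k)
    then show ?thesis using g_le[OF gap] by linarith
  qed
  then show ?thesis using entropy_ge by (simp add: g_def C_def)
qed

lemma Hstar_attained:
  assumes "0 \<le> r"
  obtains h :: "real ^ 'n::finite" where "norm h \<le> r" "Hstar r TYPE('n) = entropy (softmax h)"
proof -
  have "cball (0 :: real ^ 'n) r \<noteq> {}" using assms by simp
  from continuous_attains_inf[OF compact_cball this continuous_on_entropy_softmax]
  obtain h :: "real ^ 'n" where h: "h \<in> cball 0 r"
    and min: "\<forall>y \<in> cball 0 r. entropy (softmax h) \<le> entropy (softmax (y :: real ^ 'n))" by blast
  have "norm h \<le> r" using h by simp
  moreover have "Hstar r TYPE('n) = entropy (softmax h)"
    unfolding Hstar_def using h min by (intro cInf_eq_minimum) auto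
  ultimately show ?thesis by (rule that)
qed

theorem theorem1:
  fixes r :: real
  assumes "CARD('n::finite) \<ge> 2" and "r > 0"
  shows "Hstar r TYPE('n) >
           ln (1 + (real CARD('n) - 1) * exp (- sqrt (real CARD('n) / (real CARD('n) - 1)) * r))
       \<and> (\<forall>h :: real ^ 'n. norm h \<le> r \<longrightarrow>
           entropy (softmax h) >
           ln (1 + (real CARD('n) - 1) * exp (- sqrt (real CARD('n) / (real CARD('n) - 1)) * r)))"
proof -
  obtain h :: "real ^ 'n" where "norm h \<le> r" "Hstar r TYPE('n) = entropy (softmax h)"
    using Hstar_attained[OF less_imp_le[OF assms(2)]] .
  then show ?thesis using entropy_softmax_gt[OF assms] by auto
qed

end
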